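(* Let $V=\{1,\dots,p\}$ and let $F:2^V\to\mathbb{R}$ be a submodular, nondecreasing set-function with $F(\varnothing)=0$ and $F(\{k\})>0$ for all $k\in V$. Let $f$ be the Lovász extension of $F$ and define $\Omega:\mathbb{R}^p\to\mathbb{R}$ by $\Omega(w)=f(|w|)$. Then: (i) $\Omega$ is a norm on $\mathbb{R}^p$; (ii) $\Omega$ is the convex envelope (largest convex function lying below) of the function $g:w\mapsto F(\mathrm{Supp}(w))$ on the unit $\ell_\infty$-ball $\{w\in\mathbb{R}^p:\|w\|_\infty\leqslant 1\}$; (iii) the dual norm of $\Omega$, $\Omega^\ast(s)=\max_{\Omega(w)\leqslant 1} s^\top w$, satisfies $$\Omega^\ast(s)=\max_{A\subset V,\,A\neq\varnothing}\frac{\|s_A\|_1}{F(A)}=\max_{A\in\mathcal{T}}\frac{\|s_A\|_1}{F(A)}.$$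
   Context: For $w\in\mathbb{R}^p$, $|w|$ is the vector of absolute values of its components, $\mathrm{Supp}(w)=\{j\in V: w_j\neq 0\}$, and $s_A$ is the subvector of $s$ indexed by $A$. The Lovász extension $f:\mathbb{R}_+^p\to\mathbb{R}$ of $F$ is defined as follows: for $w\in\mathbb{R}_+^p$, order the components as $w_{j_1}\geqslant\cdots\geqslant w_{j_p}\geqslant 0$ and set $f(w)=\sum_{k=1}^p w_{j_k}[F(\{j_1,\dots,j_k\})-F(\{j_1,\dots,j_{k-1}\})]$. A set $A\subset V$ is stable if for every $B\supset A$ with $B\neq A$ one has $F(B)>F(A)$. A nonempty set $A$ is separable if there is a partition $A=B_1\cup\cdots\cup B_k$ into $k\geqslant 2$ nonempty sets with $F(A)=F(B_1)+\cdots+F(B_k)$, and inseparable otherwise. $\mathcal{T}$ denotes the family of nonempty subsets of $V$ that are both stable and inseparable. *)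

theory Defs
  imports "HOL-Analysis.Analysis"
begin

text \<open>Ground set V is the (finite) index type 'n, with p = CARD('n); vectors in R^p are real^'n.\<close>

definition submodular :: "('n set \<Rightarrow> real) \<Rightarrow> bool" where
  "submodular F \<longleftrightarrow> (\<forall>A B. F (A \<union> B) + F (A \<inter> B) \<le> F A + F B)"

definition nondecreasing_setfun :: "('n set \<Rightarrow> real) \<Rightarrow> bool" where
  "nondecreasing_setfun F \<longleftrightarrow> (\<forall>A B. A \<subseteq> B \<longrightarrow> F A \<le> F B)"

text \<open>Lovasz extension: order the components decreasingly as w_{j_1} >= ... >= w_{j_p}
  (an enumeration js of V) and sum w_{j_k} (F{j_1..j_k} - F{j_1..j_{k-1}}).
  Intended for nonnegative w only.\<close>
definition lovasz_ext :: "('n::finite set \<Rightarrow> real) \<Rightarrow> real^'n \<Rightarrow> real" where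
  "lovasz_ext F w =
     (let js = (SOME js. distinct js \<and> set js = UNIV \<and> sorted_wrt (\<lambda>a b. w $ a \<ge> w $ b) js)
      in \<Sum>k<length js. w $ (js ! k) * (F (set (take (Suc k) js)) - F (set (take k js))))"

definition vabs :: "real^'n \<Rightarrow> real^'n" where
  "vabs w = (\<chi> i. \<bar>w $ i\<bar>)"

definition supp :: "real^'n \<Rightarrow> 'n set" where
  "supp w = {j. w $ j \<noteq> 0}"

definition is_norm_fun :: "(real^'n \<Rightarrow> real) \<Rightarrow> bool" where
  "is_norm_fun N \<longleftrightarrow>
     (\<forall>w. N w = 0 \<longleftrightarrow> w = 0) \<and>
     (\<forall>a w. N (a *\<^sub>R w) = \<bar>a\<bar> * N w) \<and>
     (\<forall>v w. N (v + w) \<le> N v + N w)"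

definition convex_envelope_on :: "'a::real_vector set \<Rightarrow> ('a \<Rightarrow> real) \<Rightarrow> ('a \<Rightarrow> real) \<Rightarrow> bool" where
  "convex_envelope_on S g h \<longleftrightarrow>
     convex_on S h \<and> (\<forall>w\<in>S. h w \<le> g w) \<and>
     (\<forall>h'. convex_on S h' \<and> (\<forall>w\<in>S. h' w \<le> g w) \<longrightarrow> (\<forall>w\<in>S. h' w \<le> h w))"

definition linf_ball :: "(real^'n) set" where
  "linf_ball = {w. \<forall>i. \<bar>w $ i\<bar> \<le> 1}"

definition dual_norm :: "(real^'n \<Rightarrow> real) \<Rightarrow> real^'n \<Rightarrow> real" where
  "dual_norm N s = Sup {s \<bullet> w | w. N w \<le> 1}"

definition stable_set :: "('n set \<Rightarrow> real) \<Rightarrow> 'n set \<Rightarrow> bool" where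
  "stable_set F A \<longleftrightarrow> (\<forall>B. A \<subset> B \<longrightarrow> F B > F A)"

definition separable_set :: "('n set \<Rightarrow> real) \<Rightarrow> 'n set \<Rightarrow> bool" where
  "separable_set F A \<longleftrightarrow> A \<noteq> {} \<and>
     (\<exists>P. finite P \<and> \<Union>P = A \<and> {} \<notin> P \<and> card P \<ge> 2 \<and>
          (\<forall>B\<in>P. \<forall>C\<in>P. B \<noteq> C \<longrightarrow> B \<inter> C = {}) \<and>
          F A = (\<Sum>B\<in>P. F B))"

definition inseparable_set :: "('n set \<Rightarrow> real) \<Rightarrow> 'n set \<Rightarrow> bool" where
  "inseparable_set F A \<longleftrightarrow> A \<noteq> {} \<and> \<not> separable_set F A"

definition stable_inseparable_family :: "('n set \<Rightarrow> real) \<Rightarrow> 'n set set" where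
  "stable_inseparable_family F = {A. A \<noteq> {} \<and> stable_set F A \<and> inseparable_set F A}"

end

theory Submission
  imports Defs
begin

text \<open>
  For \<open>w \<ge> 0\<close> with decreasing enumeration \<open>j_1, ..., j_p\<close>, the Lovasz extension is
  \<open>f(w) = w \<bullet> g\<close> for the greedy vector \<open>g_{j_k} = F{j_1..j_k} - F{j_1..j_{k-1}}\<close>,
  which lies in \<open>P(F) = {x. x(A) \<le> F(A) for all A}\<close> by submodularity. Summation by
  parts writes \<open>f(w)\<close> as a nonnegative combination of the values \<open>F{j_1..j_k}\<close>, so
  \<open>w \<bullet> x \<le> f(w)\<close> for every \<open>x \<in> P(F)\<close>: on the nonnegative orthant \<open>f\<close> is the
  support function of \<open>P(F)\<close>. Hence \<open>f\<close> is positively homogeneous and subadditive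
  (and monotone, as \<open>F\<close> is), \<open>\<Omega>(w) = f(|w|)\<close> is a norm, and its dual norm is
  \<open>max_A |s|(A) / F(A)\<close>.

  The same summation by parts writes any \<open>w\<close> with \<open>|w_j| \<le> 1\<close> as a convex combination
  of \<open>0\<close> and the sign vectors of \<open>w\<close> on the level sets \<open>{j_1..j_k}\<close> of \<open>|w|\<close>, with
  weights \<open>|w_{j_k}| - |w_{j_{k+1}}|\<close>; the values of \<open>F(Supp \<cdot>)\<close> at these points
  average to \<open>\<Omega>(w)\<close>, so every convex minorant of \<open>F(Supp \<cdot>)\<close> lies below \<open>\<Omega>\<close>.

  A maximiser \<open>A\<close> of \<open>|s|(A) / F(A)\<close> of least cardinality extends, without changing
  \<open>F\<close>, to a stable set \<open>B\<close>. Were \<open>B\<close> separable, \<open>F(B) = \<Sum> F(C)\<close>, then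
  \<open>F(A) = \<Sum> F(A \<inter> C)\<close> and every \<open>A \<inter> C\<close> would be a smaller maximiser.
\<close>

lemma linf_ball_eq_cbox: "linf_ball = cbox (- 1) (1 :: real^'n)"
  by (auto simp: linf_ball_def mem_box_cart abs_le_iff)

lemma convex_linf_ball: "convex linf_ball"
  unfolding linf_ball_eq_cbox by (rule convex_box)

lemma convex_on_if_is_norm_fun:
  assumes "is_norm_fun N" "convex S"
  shows "convex_on S N"
proof (rule convex_onI)
  fix t :: real and x y
  assume t: "0 < t" "t < 1"
  have "N ((1 - t) *\<^sub>R x + t *\<^sub>R y) \<le> N ((1 - t) *\<^sub>R x) + N (t *\<^sub>R y)"
    using assms(1) unfolding is_norm_fun_def by blast
  also have "\<dots> = (1 - t) * N x + t * N y"
    using assms(1) t unfolding is_norm_fun_def by simp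
  finally show "N ((1 - t) *\<^sub>R x + t *\<^sub>R y) \<le> (1 - t) * N x + t * N y" .
qed (rule assms(2))

lemma dual_norm_eq_maximum:
  assumes "N w\<^sub>0 \<le> 1" "s \<bullet> w\<^sub>0 = M" "\<And>w. N w \<le> 1 \<Longrightarrow> s \<bullet> w \<le> M"
  shows "dual_norm N s = M"
  unfolding dual_norm_def by (rule cSup_eq_maximum) (use assms in auto)

lemma nondecreasing_setfunD: "nondecreasing_setfun F \<Longrightarrow> A \<subseteq> B \<Longrightarrow> F A \<le> F B"
  unfolding nondecreasing_setfun_def by blast

lemma nondecreasing_setfun_nonneg: "F {} = 0 \<Longrightarrow> nondecreasing_setfun F \<Longrightarrow> F A \<ge> 0"
  using nondecreasing_setfunD[of F "{}" A] by simp

lemma exists_stable_superset: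
  fixes F :: "'n::finite set \<Rightarrow> real"
  assumes "nondecreasing_setfun F"
  obtains B where "A \<subseteq> B" "F B = F A" "stable_set F B"
proof -
  have "\<forall>C. A \<subseteq> C \<and> F C = F A \<longrightarrow> card C < Suc CARD('n)"
    by (simp add: card_mono less_Suc_eq_le)
  then obtain B where B: "A \<subseteq> B" "F B = F A"
    and B_max: "\<And>C. A \<subseteq> C \<and> F C = F A \<Longrightarrow> card C \<le> card B"
    using ex_has_greatest_nat[of "\<lambda>C. A \<subseteq> C \<and> F C = F A" A card] by blast
  have "F B < F C" if "B \<subset> C" for C
  proof -
    have "card B < card C" using that by (simp add: psubset_card_mono)
    then have "F C \<noteq> F A" using B_max[of C] B that by fastforce
    then show ?thesis using nondecreasing_setfunD[OF assms, of B C] B that by auto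
  qed
  then show ?thesis using that B unfolding stable_set_def by blast
qed

lemma submodular_Union_le:
  assumes "submodular F" "F {} = 0" "nondecreasing_setfun F" "finite P"
  shows "F (\<Union>C\<in>P. g C) \<le> (\<Sum>C\<in>P. F (g C))"
  using assms(4)
proof (induction P rule: finite_induct)
  case empty
  then show ?case using assms(2) by simp
next
  case (insert C P)
  have "F (g C \<union> (\<Union>D\<in>P. g D)) + F (g C \<inter> (\<Union>D\<in>P. g D)) \<le> F (g C) + F (\<Union>D\<in>P. g D)"
    using assms(1) unfolding submodular_def by blast
  then show ?case using insert nondecreasing_setfun_nonneg[OF assms(2,3), of "g C \<inter> (\<Union>D\<in>P. g D)"] by simp
qed

definition decreasing_enum :: "real^'n::finite \<Rightarrow> 'n list" where
  "decreasing_enum w = (SOME js. distinct js \<and> set js = UNIV \<and> sorted_wrt (\<lambda>a b. w $ a \<ge> w $ b) js)"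

lemma decreasing_enum:
  fixes w :: "real^'n::finite"
  shows "distinct (decreasing_enum w)" "set (decreasing_enum w) = UNIV"
    "sorted_wrt (\<lambda>a b. w $ a \<ge> w $ b) (decreasing_enum w)"
proof -
  obtain xs :: "'n list" where xs: "set xs = UNIV"
    using finite_list[OF finite] by blast
  let ?js = "sort_key (\<lambda>a. - w $ a) (remdups xs)"
  have "sorted_wrt (\<lambda>a b. - w $ a \<le> - w $ b) ?js"
    using sorted_sort_key[of "\<lambda>a. - w $ a" "remdups xs"] unfolding sorted_map .
  then have "sorted_wrt (\<lambda>a b. w $ a \<ge> w $ b) ?js"
    by (rule sorted_wrt_mono_rel[rotated]) simp
  moreover have "distinct ?js" "set ?js = UNIV" by (simp_all add: xs)
  ultimately have "\<exists>js. distinct js \<and> set js = UNIV \<and> sorted_wrt (\<lambda>a b. w $ a \<ge> w $ b) js"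
    by blast
  from someI_ex[OF this] show "distinct (decreasing_enum w)" "set (decreasing_enum w) = UNIV"
    "sorted_wrt (\<lambda>a b. w $ a \<ge> w $ b) (decreasing_enum w)"
    unfolding decreasing_enum_def by blast+
qed

lemma sum_nth_eq_sum_UNIV:
  assumes "distinct js" "set js = (UNIV :: 'n::finite set)"
  shows "(\<Sum>k<length js. g (js ! k)) = (\<Sum>i\<in>UNIV. g i)"
  using sum.reindex_bij_betw[OF bij_betw_nth[OF assms(1) refl refl], of g] assms(2) by simp

lemma set_take_Suc_nth: "k < length js \<Longrightarrow> set (take (Suc k) js) = insert (js ! k) (set (take k js))"
  by (simp add: take_Suc_conv_app_nth)

lemma nth_in_set_take_iff:
  assumes "distinct js" "m < length js"
  shows "js ! m \<in> set (take j js) \<longleftrightarrow> m < j"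
proof
  assume "js ! m \<in> set (take j js)"
  then obtain t where "t < length (take j js)" "take j js ! t = js ! m"
    by (auto simp: in_set_conv_nth)
  then show "m < j" using assms nth_eq_iff_index_eq by fastforce
next
  assume "m < j"
  then show "js ! m \<in> set (take j js)"
    using assms(2) by (metis in_set_conv_nth length_take min_less_iff_conj nth_take)
qed

lemma nth_in_level_set_telescope:
  assumes "distinct js" "m < length js"
  shows "(\<Sum>k<length js. if js ! m \<in> set (take (Suc k) js) then f k - f (Suc k) else 0)
    = f m - (f (length js) :: real)"
proof -
  have "(\<Sum>k<length js. if js ! m \<in> set (take (Suc k) js) then f k - f (Suc k) else 0)
      = (\<Sum>k\<in>{k \<in> {..<length js}. m \<le> k}. f k - f (Suc k))"
    by (subst sum.inter_filter) (simp_all add: nth_in_set_take_iff[OF assms] less_Suc_eq_le)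
  also have "{k \<in> {..<length js}. m \<le> k} = {m..<length js}" by auto
  also have "(\<Sum>k\<in>{m..<length js}. f k - f (Suc k)) = f m - f (length js)"
    using sum_Suc_diff'[of m "length js" "\<lambda>k. - f k"] assms(2) by simp
  finally show ?thesis .
qed

definition lovasz_along :: "('n set \<Rightarrow> real) \<Rightarrow> 'n list \<Rightarrow> real^'n \<Rightarrow> real" where
  "lovasz_along H js v =
     (\<Sum>k<length js. v $ (js ! k) * (H (set (take (Suc k) js)) - H (set (take k js))))"

lemma lovasz_ext_eq_lovasz_along: "lovasz_ext F w = lovasz_along F (decreasing_enum w) w"
  by (simp add: lovasz_ext_def lovasz_along_def decreasing_enum_def Let_def)

text \<open>The coefficient past the end of the enumeration is \<open>0\<close>; this produces the last
  summand \<open>w_{j_p} F(V)\<close> of the level-set form.\<close>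
definition enum_coeff :: "'n list \<Rightarrow> real^'n \<Rightarrow> nat \<Rightarrow> real" where
  "enum_coeff js v k = (if k < length js then v $ (js ! k) else 0)"

lemma summation_by_parts_lessThan:
  fixes a H :: "nat \<Rightarrow> real"
  shows "(\<Sum>k<n. a k * (H (Suc k) - H k)) =
    (\<Sum>k<n. (a k - a (Suc k)) * H (Suc k)) + a n * H n - a 0 * H 0"
  by (induction n) (simp_all add: algebra_simps)

lemma lovasz_along_level_sets:
  assumes "H {} = 0"
  shows "lovasz_along H js v =
    (\<Sum>k<length js. (enum_coeff js v k - enum_coeff js v (Suc k)) * H (set (take (Suc k) js)))"
proof -
  have "lovasz_along H js v = (\<Sum>k<length js. enum_coeff js v k *
      ((\<lambda>k. H (set (take k js))) (Suc k) - (\<lambda>k. H (set (take k js))) k))"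
    unfolding lovasz_along_def by (rule sum.cong) (auto simp: enum_coeff_def)
  then show ?thesis
    using summation_by_parts_lessThan[of "enum_coeff js v" "\<lambda>k. H (set (take k js))" "length js"]
      assms by (simp add: enum_coeff_def)
qed

lemma enum_coeff_diff_nonneg:
  assumes "sorted_wrt (\<lambda>a b. v $ a \<ge> v $ b) js" "\<forall>i. v $ i \<ge> 0"
  shows "enum_coeff js v k - enum_coeff js v (Suc k) \<ge> 0"
  using assms sorted_wrt_nth_less[OF assms(1), of k "Suc k"] by (simp add: enum_coeff_def)

lemma lovasz_along_modular:
  assumes "distinct js" "set js = (UNIV :: 'n::finite set)"
  shows "lovasz_along (\<lambda>A. \<Sum>i\<in>A. x $ i) js v = v \<bullet> x"
proof -
  have "lovasz_along (\<lambda>A. \<Sum>i\<in>A. x $ i) js v = (\<Sum>k<length js. v $ (js ! k) * x $ (js ! k))"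
    unfolding lovasz_along_def using assms(1) nth_in_set_take_iff[OF assms(1)]
    by (intro sum.cong) (auto simp: set_take_Suc_nth)
  then show ?thesis by (simp add: sum_nth_eq_sum_UNIV[OF assms, of "\<lambda>i. v $ i * x $ i"] inner_vec_def)
qed

text \<open>Both sides are integrated against the nonnegative level-set weights of \<open>v\<close>.\<close>
lemma inner_le_lovasz_along:
  assumes "F {} = 0" "distinct js" "set js = (UNIV :: 'n::finite set)"
    and "sorted_wrt (\<lambda>a b. v $ a \<ge> v $ b) js" "\<forall>i. v $ i \<ge> 0"
    and "\<forall>A. (\<Sum>i\<in>A. x $ i) \<le> c * F A"
  shows "v \<bullet> x \<le> c * lovasz_along F js v"
proof -
  let ?\<mu> = "\<lambda>k. enum_coeff js v k - enum_coeff js v (Suc k)"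
  have "v \<bullet> x = (\<Sum>k<length js. ?\<mu> k * (\<Sum>i\<in>set (take (Suc k) js). x $ i))"
    by (simp add: lovasz_along_modular[OF assms(2,3), symmetric] lovasz_along_level_sets)
  also have "\<dots> \<le> (\<Sum>k<length js. ?\<mu> k * (c * F (set (take (Suc k) js))))"
    using assms(6) enum_coeff_diff_nonneg[OF assms(4,5)] by (intro sum_mono mult_left_mono) auto
  also have "\<dots> = c * lovasz_along F js v"
    by (simp add: lovasz_along_level_sets[of F, OF assms(1)] sum_distrib_left algebra_simps)
  finally show ?thesis .
qed

section \<open>The greedy vector\<close>

definition enum_pos :: "'a list \<Rightarrow> 'a \<Rightarrow> nat" where
  "enum_pos js i = the_inv_into {..<length js} ((!) js) i"

lemma enum_pos_nth: "distinct js \<Longrightarrow> k < length js \<Longrightarrow> enum_pos js (js ! k) = k"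
  unfolding enum_pos_def
  by (rule the_inv_into_f_f) (auto intro: bij_betw_imp_inj_on[OF bij_betw_nth[OF _ refl refl]])

definition greedy_vec :: "('n set \<Rightarrow> real) \<Rightarrow> 'n list \<Rightarrow> real^'n" where
  "greedy_vec F js =
     (\<chi> i. F (set (take (Suc (enum_pos js i)) js)) - F (set (take (enum_pos js i) js)))"

lemma greedy_vec_nth:
  "distinct js \<Longrightarrow> k < length js \<Longrightarrow>
     greedy_vec F js $ (js ! k) = F (set (take (Suc k) js)) - F (set (take k js))"
  by (simp add: greedy_vec_def enum_pos_nth)

lemma lovasz_along_eq_inner_greedy_vec:
  assumes "distinct js" "set js = (UNIV :: 'n::finite set)"
  shows "lovasz_along F js v = v \<bullet> greedy_vec F js"
proof -
  have "lovasz_along F js v = (\<Sum>k<length js. v $ (js ! k) * greedy_vec F js $ (js ! k))"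
    unfolding lovasz_along_def by (rule sum.cong) (auto simp: greedy_vec_nth[OF assms(1)])
  then show ?thesis
    by (simp add: sum_nth_eq_sum_UNIV[OF assms, of "\<lambda>i. v $ i * greedy_vec F js $ i"] inner_vec_def)
qed

lemma greedy_vec_nonneg:
  assumes "nondecreasing_setfun F" "distinct js" "set js = (UNIV :: 'n::finite set)"
  shows "greedy_vec F js $ i \<ge> 0"
proof -
  obtain k where k: "k < length js" "i = js ! k"
    using assms(3) by (metis UNIV_I in_set_conv_nth)
  have "set (take k js) \<subseteq> set (take (Suc k) js)" by (rule set_take_subset_set_take) simp
  then show ?thesis
    using assms(1) k by (simp add: greedy_vec_nth[OF assms(2)] nondecreasing_setfun_def)
qed

lemma greedy_vec_sum_le:
  assumes sub: "submodular F" and "F {} = 0"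
    and js: "distinct js" "set js = (UNIV :: 'n::finite set)"
  shows "(\<Sum>i\<in>A. greedy_vec F js $ i) \<le> F A"
proof -
  let ?g = "greedy_vec F js"
  have "(\<Sum>i\<in>A \<inter> set (take m js). ?g $ i) \<le> F (A \<inter> set (take m js))" for m
  proof (induction m)
    case 0
    then show ?case using assms(2) by simp
  next
    case (Suc m)
    let ?T = "set (take m js)" and ?j = "js ! m"
    show ?case
    proof (cases "m < length js \<and> ?j \<in> A")
      case False
      then have "A \<inter> set (take (Suc m) js) = A \<inter> ?T"
        by (cases "m < length js") (auto simp: set_take_Suc_nth)
      then show ?thesis using Suc by simp
    next
      case True
      let ?Y = "insert ?j (A \<inter> ?T)"
      have ins: "set (take (Suc m) js) = insert ?j ?T" using True by (simp add: set_take_Suc_nth)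
      have nj: "?j \<notin> ?T" using True nth_in_set_take_iff[OF js(1)] by auto
      have "F (?T \<union> ?Y) + F (?T \<inter> ?Y) \<le> F ?T + F ?Y"
        using sub unfolding submodular_def by blast
      moreover have "?T \<union> ?Y = insert ?j ?T" "?T \<inter> ?Y = A \<inter> ?T" using nj by auto
      ultimately have "F (insert ?j ?T) - F ?T + F (A \<inter> ?T) \<le> F ?Y" by simp
      moreover have "(\<Sum>i\<in>?Y. ?g $ i) = F (insert ?j ?T) - F ?T + (\<Sum>i\<in>A \<inter> ?T. ?g $ i)"
        using nj True ins by (simp add: greedy_vec_nth[OF js(1)])
      moreover have "A \<inter> set (take (Suc m) js) = ?Y" using ins True by auto
      ultimately show ?thesis using Suc by simp
    qed
  qed
  from this[of "length js"] show ?thesis using js(2) by simp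
qed

lemma lovasz_ext_eq_inner_greedy_vec:
  "lovasz_ext F v = v \<bullet> greedy_vec F (decreasing_enum v)"
  by (simp add: lovasz_ext_eq_lovasz_along lovasz_along_eq_inner_greedy_vec decreasing_enum)

lemma inner_le_lovasz_ext:
  assumes "F {} = 0" "\<forall>i. v $ i \<ge> 0" "\<forall>A. (\<Sum>i\<in>A. x $ i) \<le> c * F A"
  shows "v \<bullet> x \<le> c * lovasz_ext F v"
  unfolding lovasz_ext_eq_lovasz_along
  by (rule inner_le_lovasz_along[OF assms(1) decreasing_enum assms(2,3)])

lemma lovasz_ext_ge_singleton:
  fixes F :: "'n::finite set \<Rightarrow> real"
  assumes "F {} = 0" "nondecreasing_setfun F" "\<forall>i. v $ i \<ge> 0"
  shows "v $ k * F {k} \<le> lovasz_ext F v"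
proof -
  define x :: "real^'n" where "x = (\<chi> j. if j = k then F {k} else 0)"
  have "(\<Sum>i\<in>A. x $ i) \<le> F A" for A
    using nondecreasing_setfunD[OF assms(2), of "{k}" A] nondecreasing_setfun_nonneg[OF assms(1,2)]
    by (simp add: x_def sum.delta)
  then have "v \<bullet> x \<le> lovasz_ext F v"
    using inner_le_lovasz_ext[of F, OF assms(1,3), of x 1] by simp
  moreover have "v \<bullet> x = v $ k * F {k}"
    by (simp add: inner_vec_def x_def if_distrib cong: if_cong)
  ultimately show ?thesis by simp
qed

context
  fixes F :: "'n::finite set \<Rightarrow> real"
  assumes sub: "submodular F" and F_empty: "F {} = 0"
begin

lemma greedy_vec_enum_sum_le: "(\<Sum>i\<in>A. greedy_vec F (decreasing_enum v) $ i) \<le> F A"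
  by (rule greedy_vec_sum_le[OF sub F_empty decreasing_enum(1,2)])

lemma inner_greedy_vec_le_lovasz_ext:
  "\<forall>i. u $ i \<ge> 0 \<Longrightarrow> u \<bullet> greedy_vec F (decreasing_enum v) \<le> lovasz_ext F u"
  using inner_le_lovasz_ext[of F, OF F_empty, of u _ 1] greedy_vec_enum_sum_le by simp

lemma lovasz_ext_scaleR:
  assumes "c \<ge> 0" "\<forall>i. v $ i \<ge> 0"
  shows "lovasz_ext F (c *\<^sub>R v) = c * lovasz_ext F v"
proof (rule antisym)
  have "lovasz_ext F (c *\<^sub>R v) = c * (v \<bullet> greedy_vec F (decreasing_enum (c *\<^sub>R v)))"
    by (simp add: lovasz_ext_eq_inner_greedy_vec)
  also have "\<dots> \<le> c * lovasz_ext F v"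
    using assms by (intro mult_left_mono inner_greedy_vec_le_lovasz_ext)
  finally show "lovasz_ext F (c *\<^sub>R v) \<le> c * lovasz_ext F v" .
  have "c * lovasz_ext F v = (c *\<^sub>R v) \<bullet> greedy_vec F (decreasing_enum v)"
    by (simp add: lovasz_ext_eq_inner_greedy_vec)
  also have "\<dots> \<le> lovasz_ext F (c *\<^sub>R v)"
    using assms by (intro inner_greedy_vec_le_lovasz_ext) simp
  finally show "c * lovasz_ext F v \<le> lovasz_ext F (c *\<^sub>R v)" .
qed

lemma lovasz_ext_add_le:
  assumes "\<forall>i. u $ i \<ge> 0" "\<forall>i. v $ i \<ge> 0"
  shows "lovasz_ext F (u + v) \<le> lovasz_ext F u + lovasz_ext F v"
  using inner_greedy_vec_le_lovasz_ext[OF assms(1), of "u + v"]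
    inner_greedy_vec_le_lovasz_ext[OF assms(2), of "u + v"]
  by (simp add: lovasz_ext_eq_inner_greedy_vec[of F "u + v"] inner_add_left)

context
  assumes mono: "nondecreasing_setfun F"
begin

lemma lovasz_ext_mono:
  assumes "\<forall>i. 0 \<le> u $ i \<and> u $ i \<le> v $ i"
  shows "lovasz_ext F u \<le> lovasz_ext F v"
proof -
  let ?g = "greedy_vec F (decreasing_enum u)"
  have "lovasz_ext F u = (\<Sum>i\<in>UNIV. u $ i * ?g $ i)"
    by (simp add: lovasz_ext_eq_inner_greedy_vec inner_vec_def)
  also have "\<dots> \<le> (\<Sum>i\<in>UNIV. v $ i * ?g $ i)"
    using assms greedy_vec_nonneg[OF mono decreasing_enum(1,2)]
    by (intro sum_mono mult_right_mono) auto
  also have "\<dots> \<le> lovasz_ext F v"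
    using inner_greedy_vec_le_lovasz_ext[of v u] assms
    by (simp add: inner_vec_def) (meson order_trans)
  finally show ?thesis .
qed

lemma lovasz_ext_le_supp:
  assumes "\<forall>i. 0 \<le> v $ i \<and> v $ i \<le> 1"
  shows "lovasz_ext F v \<le> F (supp v)"
proof -
  let ?g = "greedy_vec F (decreasing_enum v)"
  have "lovasz_ext F v = (\<Sum>i\<in>UNIV. v $ i * ?g $ i)"
    by (simp add: lovasz_ext_eq_inner_greedy_vec inner_vec_def)
  also have "\<dots> \<le> (\<Sum>i\<in>UNIV. if i \<in> supp v then ?g $ i else 0)"
    using assms greedy_vec_nonneg[OF mono decreasing_enum(1,2)]
    by (intro sum_mono) (auto simp: supp_def intro: mult_left_le_one_le)
  also have "\<dots> = (\<Sum>i\<in>supp v. ?g $ i)"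
    by (simp add: sum.inter_restrict[symmetric])
  also have "\<dots> \<le> F (supp v)" by (rule greedy_vec_enum_sum_le)
  finally show ?thesis .
qed

end

end

section \<open>The norm \<open>\<Omega>\<close>\<close>

definition lovasz_norm :: "('n::finite set \<Rightarrow> real) \<Rightarrow> real^'n \<Rightarrow> real" where
  "lovasz_norm F w = lovasz_ext F (vabs w)"

definition sign_on :: "'n set \<Rightarrow> real^'n \<Rightarrow> real^'n" where
  "sign_on A w = (\<chi> i. if i \<in> A then sgn (w $ i) else 0)"

lemma sign_on_in_linf_ball: "sign_on A w \<in> linf_ball"
  by (simp add: sign_on_def linf_ball_def abs_sgn_eq)

lemma supp_sign_on_subset: "supp (sign_on A w) \<subseteq> A"
  by (auto simp: supp_def sign_on_def)

lemma inner_sign_on: "s \<bullet> sign_on A s = (\<Sum>i\<in>A. \<bar>s $ i\<bar>)"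
  by (simp add: inner_vec_def sign_on_def if_distrib sum.If_cases abs_sgn)

lemma sign_on_empty [simp]: "sign_on {} w = 0"
  by (simp add: sign_on_def vec_eq_iff)

lemma sum_sign_on_prefixes:
  assumes "distinct js" "set js = (UNIV :: 'n::finite set)"
  shows "(\<Sum>k<length js. (enum_coeff js (vabs w) k - enum_coeff js (vabs w) (Suc k)) *\<^sub>R
      sign_on (set (take (Suc k) js)) w) = w"
proof (subst vec_eq_iff, intro allI)
  fix i
  let ?a = "enum_coeff js (vabs w)"
  obtain m where m: "m < length js" "i = js ! m"
    using assms(2) by (metis UNIV_I in_set_conv_nth)
  have "(\<Sum>k<length js. (?a k - ?a (Suc k)) *\<^sub>R sign_on (set (take (Suc k) js)) w) $ i
      = sgn (w $ i) * (\<Sum>k<length js. if js ! m \<in> set (take (Suc k) js) then ?a k - ?a (Suc k) else 0)"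
    unfolding sum_distrib_left by (simp add: sign_on_def m(2)) (rule sum.cong; simp)
  also have "\<dots> = w $ i"
    using nth_in_level_set_telescope[OF assms(1) m(1), of ?a] m
    by (simp add: enum_coeff_def vabs_def mult.commute abs_mult_sgn)
  finally show "(\<Sum>k<length js. (?a k - ?a (Suc k)) *\<^sub>R sign_on (set (take (Suc k) js)) w) $ i = w $ i" .
qed

lemma vabs_nonneg: "\<forall>i. vabs w $ i \<ge> 0"
  by (simp add: vabs_def)

lemma inner_le_inner_vabs: "s \<bullet> w \<le> vabs w \<bullet> vabs s"
  unfolding inner_vec_def vabs_def
  by (intro sum_mono) (simp add: abs_mult[symmetric] mult.commute)

lemma inner_le_lovasz_norm:
  assumes "F {} = 0" "\<forall>A. (\<Sum>i\<in>A. \<bar>s $ i\<bar>) \<le> c * F A"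
  shows "s \<bullet> w \<le> c * lovasz_norm F w"
  using inner_le_inner_vabs[of s w] inner_le_lovasz_ext[of F "vabs w" "vabs s" c, OF assms(1) vabs_nonneg]
    assms(2) by (simp add: lovasz_norm_def vabs_def)

context
  fixes F :: "'n::finite set \<Rightarrow> real"
  assumes sub: "submodular F" and mono: "nondecreasing_setfun F" and F_empty: "F {} = 0"
    and singleton_pos: "\<forall>k. F {k} > 0"
begin

lemma setfun_pos: "A \<noteq> {} \<Longrightarrow> F A > 0"
proof -
  assume "A \<noteq> {}"
  then obtain k where "{k} \<subseteq> A" by blast
  then show ?thesis
    using nondecreasing_setfunD[OF mono] singleton_pos by (meson less_le_trans)
qed

lemma lovasz_norm_scaleR: "lovasz_norm F (c *\<^sub>R w) = \<bar>c\<bar> * lovasz_norm F w"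
proof -
  have "vabs (c *\<^sub>R w) = \<bar>c\<bar> *\<^sub>R vabs w" by (simp add: vabs_def vec_eq_iff abs_mult)
  then show ?thesis
    by (simp add: lovasz_norm_def lovasz_ext_scaleR[OF sub F_empty] vabs_nonneg)
qed

lemma is_norm_fun_lovasz_norm: "is_norm_fun (lovasz_norm F)"
  unfolding is_norm_fun_def
proof (intro conjI allI)
  fix w :: "real^'n"
  show "lovasz_norm F w = 0 \<longleftrightarrow> w = 0"
  proof
    assume "lovasz_norm F w = 0"
    then have le0: "\<bar>w $ k\<bar> * F {k} \<le> 0" for k
      using lovasz_ext_ge_singleton[OF F_empty mono vabs_nonneg, of w k]
      by (simp add: lovasz_norm_def vabs_def)
    have "w $ k = 0" for k
    proof (rule ccontr)
      assume "w $ k \<noteq> 0"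
      then have "0 < \<bar>w $ k\<bar> * F {k}" using singleton_pos by simp
      then show False using le0[of k] by simp
    qed
    then show "w = 0" by (simp add: vec_eq_iff)
  next
    assume "w = 0"
    then show "lovasz_norm F w = 0"
      using lovasz_norm_scaleR[of 0 w] by simp
  qed
next
  fix v w :: "real^'n"
  have "lovasz_norm F (v + w) \<le> lovasz_ext F (vabs v + vabs w)"
    unfolding lovasz_norm_def
    by (intro lovasz_ext_mono[OF sub F_empty mono]) (simp add: vabs_def abs_triangle_ineq)
  also have "\<dots> \<le> lovasz_norm F v + lovasz_norm F w"
    unfolding lovasz_norm_def by (intro lovasz_ext_add_le[OF sub F_empty] vabs_nonneg)
  finally show "lovasz_norm F (v + w) \<le> lovasz_norm F v + lovasz_norm F w" .
qed (rule lovasz_norm_scaleR)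

lemma lovasz_norm_le_supp: "w \<in> linf_ball \<Longrightarrow> lovasz_norm F w \<le> F (supp w)"
  using lovasz_ext_le_supp[OF sub F_empty mono, of "vabs w"]
  by (simp add: lovasz_norm_def linf_ball_def vabs_def supp_def)

section \<open>The convex envelope\<close>

lemma linf_ball_level_set_combination:
  assumes "w \<in> linf_ball"
  obtains I :: "nat set" and \<theta> q where "finite I" "\<forall>k\<in>I. 0 \<le> \<theta> k" "sum \<theta> I = 1" "\<forall>k\<in>I. q k \<in> linf_ball"
    "(\<Sum>k\<in>I. \<theta> k *\<^sub>R q k) = w" "(\<Sum>k\<in>I. \<theta> k * F (supp (q k))) \<le> lovasz_norm F w"
proof -
  let ?js = "decreasing_enum (vabs w)"
  define n where "n = length ?js"
  define a where "a = enum_coeff ?js (vabs w)"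
  define L where "L k = (if k < n then set (take (Suc k) ?js) else {})" for k
  define \<theta> where "\<theta> k = (if k < n then a k - a (Suc k) else 1 - a 0)" for k
  define q where "q k = sign_on (L k) w" for k
  have an: "a n = 0" by (simp add: a_def enum_coeff_def n_def)
  have a0: "a 0 \<le> 1"
    using assms by (simp add: a_def enum_coeff_def linf_ball_def vabs_def)
  have \<theta>_nonneg: "0 \<le> \<theta> k" for k
    using enum_coeff_diff_nonneg[OF decreasing_enum(3) vabs_nonneg[of w], of k] a0
    unfolding \<theta>_def a_def by simp
  have \<theta>_sum: "sum \<theta> {..<Suc n} = 1"
    using sum_lessThan_telescope'[of a n] an by (simp add: \<theta>_def)
  have combination: "(\<Sum>k<Suc n. \<theta> k *\<^sub>R q k) = w"
  proof -
    have "(\<Sum>k<Suc n. \<theta> k *\<^sub>R q k) = (\<Sum>k<n. (a k - a (Suc k)) *\<^sub>R sign_on (set (take (Suc k) ?js)) w)"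
      by (simp add: q_def L_def, intro sum.cong) (simp_all add: \<theta>_def)
    then show ?thesis
      using sum_sign_on_prefixes[OF decreasing_enum(1,2), of "vabs w" w] by (simp add: a_def n_def)
  qed
  have "(\<Sum>k<Suc n. \<theta> k * F (supp (q k))) \<le> (\<Sum>k<Suc n. \<theta> k * F (L k))"
    using \<theta>_nonneg nondecreasing_setfunD[OF mono supp_sign_on_subset]
    by (intro sum_mono mult_left_mono) (auto simp: q_def)
  also have "\<dots> = (\<Sum>k<n. (a k - a (Suc k)) * F (set (take (Suc k) ?js)))"
    by (simp add: L_def F_empty, intro sum.cong) (simp_all add: \<theta>_def)
  also have "\<dots> = lovasz_norm F w"
    unfolding lovasz_norm_def lovasz_ext_eq_lovasz_along a_def n_def
    by (rule lovasz_along_level_sets[of F, OF F_empty, symmetric])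
  finally have cost: "(\<Sum>k<Suc n. \<theta> k * F (supp (q k))) \<le> lovasz_norm F w" .
  show ?thesis
  proof (rule that[of "{..<Suc n}" \<theta> q])
    show "\<forall>k\<in>{..<Suc n}. q k \<in> linf_ball" by (simp add: q_def sign_on_in_linf_ball)
  qed (use \<theta>_nonneg \<theta>_sum combination cost in blast)+
qed

lemma convex_minorant_le_lovasz_norm:
  assumes h: "convex_on linf_ball h" "\<forall>w\<in>linf_ball. h w \<le> F (supp w)"
    and w: "w \<in> linf_ball"
  shows "h w \<le> lovasz_norm F w"
proof -
  obtain I :: "nat set" and \<theta> q where I: "finite I" "\<forall>k\<in>I. 0 \<le> \<theta> k" "sum \<theta> I = 1" "\<forall>k\<in>I. q k \<in> linf_ball"
    and w_eq: "(\<Sum>k\<in>I. \<theta> k *\<^sub>R q k) = w"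
    and cost: "(\<Sum>k\<in>I. \<theta> k * F (supp (q k))) \<le> lovasz_norm F w"
    by (rule linf_ball_level_set_combination[OF w])
  have "I \<noteq> {}" using I(3) by auto
  have "h w \<le> (\<Sum>k\<in>I. \<theta> k * h (q k))"
    unfolding w_eq[symmetric] using I \<open>I \<noteq> {}\<close> by (intro convex_on_sum[OF _ _ h(1)]) auto
  also have "\<dots> \<le> (\<Sum>k\<in>I. \<theta> k * F (supp (q k)))"
    using I h(2) by (intro sum_mono mult_left_mono) auto
  finally show ?thesis using cost by simp
qed

lemma convex_envelope_lovasz_norm:
  "convex_envelope_on linf_ball (\<lambda>w. F (supp w)) (lovasz_norm F)"
  unfolding convex_envelope_on_def
proof (intro conjI ballI allI impI)
  show "convex_on linf_ball (lovasz_norm F)"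
    by (rule convex_on_if_is_norm_fun[OF is_norm_fun_lovasz_norm convex_linf_ball])
  show "lovasz_norm F w \<le> F (supp w)" if "w \<in> linf_ball" for w
    using that by (rule lovasz_norm_le_supp)
  show "h w \<le> lovasz_norm F w"
    if "convex_on linf_ball h \<and> (\<forall>w\<in>linf_ball. h w \<le> F (supp w))" and "w \<in> linf_ball" for h w
    using that by (intro convex_minorant_le_lovasz_norm) auto
qed

section \<open>The dual norm\<close>

lemma Max_l1_ratio:
  fixes s :: "real^'n"
  defines "M \<equiv> Max {(\<Sum>i\<in>A. \<bar>s $ i\<bar>) / F A | A. A \<noteq> {}}"
  shows "\<And>A. (\<Sum>i\<in>A. \<bar>s $ i\<bar>) \<le> M * F A" and "\<exists>A. A \<noteq> {} \<and> (\<Sum>i\<in>A. \<bar>s $ i\<bar>) = M * F A"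
    and "M \<ge> 0"
proof -
  let ?R = "{(\<Sum>i\<in>A. \<bar>s $ i\<bar>) / F A | A. A \<noteq> {}}"
  have fin: "finite ?R" by simp
  show "(\<Sum>i\<in>A. \<bar>s $ i\<bar>) \<le> M * F A" for A
  proof (cases "A = {}")
    case False
    then have "(\<Sum>i\<in>A. \<bar>s $ i\<bar>) / F A \<in> ?R" by blast
    then have "(\<Sum>i\<in>A. \<bar>s $ i\<bar>) / F A \<le> M" unfolding M_def by (rule Max_ge[OF fin])
    then show ?thesis using setfun_pos[OF False] by (simp add: pos_divide_le_eq)
  qed (simp add: F_empty)
  have "(\<Sum>i\<in>UNIV. \<bar>s $ i\<bar>) / F UNIV \<in> ?R" by (rule CollectI, rule exI[of _ UNIV]) simp
  then have "M \<in> ?R" unfolding M_def by (intro Max_in[OF fin]) blast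
  then obtain A where A: "A \<noteq> {}" "M = (\<Sum>i\<in>A. \<bar>s $ i\<bar>) / F A" by blast
  have "(\<Sum>i\<in>A. \<bar>s $ i\<bar>) = M * F A" using setfun_pos[OF A(1)] by (simp add: A(2))
  then show "\<exists>A. A \<noteq> {} \<and> (\<Sum>i\<in>A. \<bar>s $ i\<bar>) = M * F A" using A(1) by blast
  show "M \<ge> 0" using setfun_pos[OF A(1)] by (simp add: A(2) sum_nonneg)
qed

lemma dual_norm_lovasz_norm:
  fixes s :: "real^'n"
  defines "M \<equiv> Max {(\<Sum>i\<in>A. \<bar>s $ i\<bar>) / F A | A. A \<noteq> {}}"
  shows "\<exists>w. lovasz_norm F w \<le> 1 \<and> s \<bullet> w = M"
    and "\<And>w. lovasz_norm F w \<le> 1 \<Longrightarrow> s \<bullet> w \<le> M"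
    and "dual_norm (lovasz_norm F) s = M"
proof -
  obtain A where A: "A \<noteq> {}" "(\<Sum>i\<in>A. \<bar>s $ i\<bar>) = M * F A"
    using Max_l1_ratio(2) unfolding M_def by blast
  define w\<^sub>0 where "w\<^sub>0 = (1 / F A) *\<^sub>R sign_on A s"
  have FA: "F A > 0" using setfun_pos[OF A(1)] .
  have "lovasz_norm F (sign_on A s) \<le> F A"
    using lovasz_norm_le_supp[OF sign_on_in_linf_ball]
      nondecreasing_setfunD[OF mono supp_sign_on_subset] order_trans by blast
  then have w\<^sub>0_norm: "lovasz_norm F w\<^sub>0 \<le> 1"
    using FA by (simp add: w\<^sub>0_def lovasz_norm_scaleR)
  have w\<^sub>0_inner: "s \<bullet> w\<^sub>0 = M"
    using A FA by (simp add: w\<^sub>0_def inner_sign_on)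
  then show "\<exists>w. lovasz_norm F w \<le> 1 \<and> s \<bullet> w = M" using w\<^sub>0_norm by blast
  show ub: "s \<bullet> w \<le> M" if "lovasz_norm F w \<le> 1" for w
  proof -
    have "s \<bullet> w \<le> M * lovasz_norm F w"
      using Max_l1_ratio(1)[of s] unfolding M_def by (intro inner_le_lovasz_norm[of F, OF F_empty]) blast
    also have "\<dots> \<le> M" using that Max_l1_ratio(3)[of s] unfolding M_def by (rule mult_left_le)
    finally show ?thesis .
  qed
  show "dual_norm (lovasz_norm F) s = M" by (rule dual_norm_eq_maximum[of "lovasz_norm F", OF w\<^sub>0_norm w\<^sub>0_inner ub])
qed

section \<open>Stable inseparable maximisers\<close>

text \<open>The blocks of a separation of \<open>B\<close> cut \<open>A\<close> into smaller maximisers.\<close>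
lemma separable_superset_proper_maximizer:
  assumes bound: "\<And>C. (\<Sum>i\<in>C. \<bar>s $ i\<bar>) \<le> M * F C"
    and A: "A \<subseteq> B" "F B = F A" "(\<Sum>i\<in>A. \<bar>s $ i\<bar>) = M * F A"
    and "separable_set F B"
  obtains A' where "A' \<noteq> {}" "A' \<subset> A" "(\<Sum>i\<in>A'. \<bar>s $ i\<bar>) = M * F A'"
proof -
  obtain P where P: "finite P" "\<Union>P = B" "{} \<notin> P" "2 \<le> card P"
    "\<forall>C\<in>P. \<forall>D\<in>P. C \<noteq> D \<longrightarrow> C \<inter> D = {}" "F B = (\<Sum>C\<in>P. F C)"
    using \<open>separable_set F B\<close> unfolding separable_set_def by (elim conjE exE) blast
  let ?S = "\<lambda>C. \<Sum>i\<in>C. \<bar>s $ i\<bar>"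
  have A_Union: "(\<Union>C\<in>P. A \<inter> C) = A" using P(2) A(1) by auto
  have "F A \<le> (\<Sum>C\<in>P. F (A \<inter> C))"
    using submodular_Union_le[OF sub F_empty mono P(1), of "\<lambda>C. A \<inter> C"] A_Union by simp
  moreover have "(\<Sum>C\<in>P. F (A \<inter> C)) \<le> (\<Sum>C\<in>P. F C)"
    by (intro sum_mono nondecreasing_setfunD[OF mono]) blast
  ultimately have "(\<Sum>C\<in>P. F (A \<inter> C)) = (\<Sum>C\<in>P. F C)"
    using P(6) A(2) by linarith
  then have F_cut: "F (A \<inter> C) = F C" if "C \<in> P" for C
    by (rule sum_mono_inv[of "\<lambda>C. F (A \<inter> C)" P F, OF _ _ that P(1)])
      (auto intro: nondecreasing_setfunD[OF mono])
  have cut_ne: "A \<inter> C \<noteq> {}" if "C \<in> P" for C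
  proof
    assume "A \<inter> C = {}"
    then have "F C = 0" using F_cut[OF that] F_empty by simp
    moreover have "C \<noteq> {}" using P(3) that by blast
    ultimately show False using setfun_pos[of C] by simp
  qed
  have "?S (\<Union>C\<in>P. A \<inter> C) = (\<Sum>C\<in>P. ?S (A \<inter> C))"
    by (rule sum.UNION_disjoint[OF P(1)]) (use P(5) in auto)
  then have "(\<Sum>C\<in>P. ?S (A \<inter> C)) = M * F A" by (simp only: A_Union A(3))
  also have "\<dots> = (\<Sum>C\<in>P. M * F (A \<inter> C))"
    using A(2) P(6) F_cut by (simp add: sum_distrib_left[symmetric])
  finally have S_cut: "?S (A \<inter> C) = M * F (A \<inter> C)" if "C \<in> P" for C
    by (rule sum_mono_inv[of "\<lambda>C. ?S (A \<inter> C)" P "\<lambda>C. M * F (A \<inter> C)", OF _ _ that P(1)])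
      (rule bound)
  have "\<not> card P \<le> Suc 0" using P(4) by simp
  then obtain C D where CD: "C \<in> P" "D \<in> P" "C \<noteq> D"
    using card_le_Suc0_iff_eq[OF P(1)] by blast
  have "A \<inter> C \<subset> A" using cut_ne[OF CD(2)] P(5) CD by blast
  then show ?thesis by (rule that[OF cut_ne[OF CD(1)] _ S_cut[OF CD(1)]])
qed

lemma Max_l1_ratio_stable_inseparable:
  "Max {(\<Sum>i\<in>A. \<bar>s $ i\<bar>) / F A | A. A \<in> stable_inseparable_family F}
     = Max {(\<Sum>i\<in>A. \<bar>s $ i\<bar>) / F A | A. A \<noteq> {}}" (is "Max ?T = ?M")
proof -
  let ?S = "\<lambda>C. \<Sum>i\<in>C. \<bar>s $ i\<bar>"
  have maximizer_iff: "?S C / F C = ?M \<longleftrightarrow> ?S C = ?M * F C" if "C \<noteq> {}" for C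
    using setfun_pos[OF that] by (auto simp: field_simps)
  obtain A\<^sub>1 where "A\<^sub>1 \<noteq> {} \<and> ?S A\<^sub>1 = ?M * F A\<^sub>1" using Max_l1_ratio(2) by blast
  then obtain A where A: "A \<noteq> {}" "?S A = ?M * F A"
    and A_min: "\<And>C. C \<noteq> {} \<and> ?S C = ?M * F C \<Longrightarrow> card A \<le> card C"
    using ex_has_least_nat[of "\<lambda>C. C \<noteq> {} \<and> ?S C = ?M * F C" A\<^sub>1 card] by blast
  obtain B where B: "A \<subseteq> B" "F B = F A" "stable_set F B" by (rule exists_stable_superset[OF mono])
  have "B \<noteq> {}" using A(1) B(1) by blast
  have "?S B = ?M * F B"
    using sum_mono2[OF finite B(1), of "\<lambda>i. \<bar>s $ i\<bar>"] Max_l1_ratio(1)[of s B] A(2) B(2)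
    by (simp add: antisym)
  have "\<not> separable_set F B"
  proof
    assume "separable_set F B"
    then obtain A' where "A' \<noteq> {}" "A' \<subset> A" "?S A' = ?M * F A'"
      using separable_superset_proper_maximizer[OF Max_l1_ratio(1) B(1,2) A(2)] by blast
    then show False using A_min[of A'] psubset_card_mono[OF finite, of A' A] by simp
  qed
  then have "B \<in> stable_inseparable_family F"
    using \<open>B \<noteq> {}\<close> B(3) by (simp add: stable_inseparable_family_def inseparable_set_def)
  then have "?S B / F B \<in> ?T" by blast
  then have "?M \<in> ?T" using maximizer_iff[OF \<open>B \<noteq> {}\<close>] \<open>?S B = ?M * F B\<close> by simp
  moreover have "x \<le> ?M" if "x \<in> ?T" for x
    using that by (auto simp: stable_inseparable_family_def setcompr_eq_image
        intro!: Max_ge)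
  ultimately show ?thesis by (intro Max_eqI) (auto simp: setcompr_eq_image)
qed

end

theorem proposition1:
  fixes F :: "'n::finite set \<Rightarrow> real"
    and \<Omega> :: "real^'n \<Rightarrow> real"
  assumes "submodular F"
    and "nondecreasing_setfun F"
    and "F {} = 0"
    and "\<forall>k. F {k} > 0"
    and "\<forall>w. \<Omega> w = lovasz_ext F (vabs w)"
  shows "is_norm_fun \<Omega> \<and>
         convex_envelope_on linf_ball (\<lambda>w. F (supp w)) \<Omega> \<and>
         (\<forall>s. (\<exists>w. \<Omega> w \<le> 1 \<and> s \<bullet> w = dual_norm \<Omega> s) \<and>
             (\<forall>w. \<Omega> w \<le> 1 \<longrightarrow> s \<bullet> w \<le> dual_norm \<Omega> s) \<and>
             dual_norm \<Omega> s = Max {(\<Sum>i\<in>A. \<bar>s $ i\<bar>) / F A | A. A \<noteq> {}} \<and>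
             dual_norm \<Omega> s = Max {(\<Sum>i\<in>A. \<bar>s $ i\<bar>) / F A | A. A \<in> stable_inseparable_family F})"
proof -
  have \<Omega>: "\<Omega> = lovasz_norm F" using assms(5) by (simp add: lovasz_norm_def fun_eq_iff)
  note dual = dual_norm_lovasz_norm[OF assms(1-4)]
  show ?thesis
    unfolding \<Omega>
    using is_norm_fun_lovasz_norm[OF assms(1-4)] convex_envelope_lovasz_norm[OF assms(1-4)]
      dual Max_l1_ratio_stable_inseparable[OF assms(1-4)]
    by simp
qed

end
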